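(* For $n\ge 1$, $$\sum_{\pi\in\mathfrak{S}_n}q^{{\rm altmaj}(\pi)}=\widehat{E}_n(q)\prod_{k=1}^{\lfloor\log_2 n\rfloor}\prod_{i=1}^{\lfloor n/2^k \rfloor}(1+q^i),$$ where $\widehat{E}_n(q)$ is a palindromic polynomial in $\mathbb{Z}[q]$ whose constant term is the Euler number $E_n$.
   Context: $\mathfrak{S}_n$ is the set of permutations $\pi=\pi_1\cdots\pi_n$ of $\{1,\dots,n\}$. The alternating descent set is $\widehat{D}(\pi)=\{2i:\pi_{2i}<\pi_{2i+1}\}\cup\{2i+1:\pi_{2i+1}>\pi_{2i+2}\}$ (indices in $\{1,\dots,n-1\}$), and the alternating major index is ${\rm altmaj}(\pi)=\sum_{i\in\widehat{D}(\pi)}i$. The Euler number $E_n$ is the number of down-up permutations $\pi\in\mathfrak{S}_n$, i.e. $\pi_1>\pi_2<\pi_3>\pi_4<\cdots$. A polynomial $f$ of degree $d$ is palindromic if $f(q)=q^df(1/q)$. *)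

theory Defs
  imports Complex_Main "HOL-Combinatorics.Permutations" "HOL-Computational_Algebra.Polynomial"
begin

(* A permutation pi of {1..n} is a function p with p permutes {1..n}; pi_i = p i. *)

definition alt_descent_set :: "nat \<Rightarrow> (nat \<Rightarrow> nat) \<Rightarrow> nat set" where
  "alt_descent_set n p =
     {i \<in> {1..n-1}. (even i \<and> p i < p (i+1)) \<or> (odd i \<and> p i > p (i+1))}"

definition altmaj :: "nat \<Rightarrow> (nat \<Rightarrow> nat) \<Rightarrow> nat" where
  "altmaj n p = (\<Sum>i\<in>alt_descent_set n p. i)"

definition down_up :: "nat \<Rightarrow> (nat \<Rightarrow> nat) \<Rightarrow> bool" where
  "down_up n p \<longleftrightarrow> (\<forall>i\<in>{1..n-1}. (odd i \<longrightarrow> p i > p (i+1)) \<and> (even i \<longrightarrow> p i < p (i+1)))"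

definition euler_number :: "nat \<Rightarrow> nat" where
  "euler_number n = card {p. p permutes {1..n} \<and> down_up n p}"

definition palindromic :: "'a::zero poly \<Rightarrow> bool" where
  "palindromic f \<longleftrightarrow> (\<forall>i\<le>degree f. coeff f i = coeff f (degree f - i))"

end

(*
  Write A_n(q) for the altmaj polynomial of S_n and (q;q)_n for prod_{i=1..n} (1 - q^i).
  Split a word after the last position t at which it has an alternating descent: the suffix
  has none, so it is counted by an Euler number, and a telescoping identity over t gives
    A_n = sum_{t<n} binom(n,t) E_(n-t) A_t q^t prod_{t<i<n} (1 - q^i).
  For F(x) = sum_n A_n x^n / (n! (q;q)_n) and Y(x) = sum_n E_n x^n / n! = sec x + tan x this
  reads F(x) = Y(x) F(qx); with Y' = (sec x) Y it forces F' = H F, where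
  H(x) = sum_{j even} E_j x^j / (j! (1 - q^(j+1))).  Clearing denominators in F' = H F gives a
  recurrence for A_(n+1) times prod_{j<=n even} (1 - q^(j+1)) in Z[q].  By induction,
  P_n = prod_{k>=1} prod_{i<=n/2^k} (1 + q^i) divides every term of it, since
  P_m prod_{m<i<=n} (1 - q^i) is a multiple of P_n, and P_n is coprime to 1 - q^(j+1) for odd
  j + 1.  So P_n divides A_n.  Complementing the letters exchanges alternating descents and
  non-descents, so A_n, and with it A_n / P_n, is palindromic; the constant term is
  A_n(0) = E_n.
*)

theory Submission
  imports
    Defs
    "HOL-Combinatorics.Multiset_Permutations"
    "HOL-Computational_Algebra.Formal_Power_Series"
    "HOL-Computational_Algebra.Polynomial_Factorial"
begin

unbundle fps_syntax

section \<open>Alternating descents of words\<close>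

text \<open>The letter \<open>\<pi>\<^sub>i\<close> of a word is \<open>ws ! (i - 1)\<close>, so \<open>alt_desc d ws i\<close>
  compares \<open>\<pi>\<^sub>i\<close> with \<open>\<pi>\<^sub>i\<^sub>+\<^sub>1\<close>. The offset \<open>d\<close> shifts the parity of the
  positions: \<open>alt_desc 0\<close> is the paper's alternating descent, and words of distinct letters
  with \<open>alt_desc_free 1\<close> are the down-up words.\<close>

definition alt_desc :: "nat \<Rightarrow> nat list \<Rightarrow> nat \<Rightarrow> bool" where
  "alt_desc d ws i \<longleftrightarrow>
     (even (d + i) \<and> ws ! (i - 1) < ws ! i) \<or> (odd (d + i) \<and> ws ! (i - 1) > ws ! i)"

definition alt_desc_free :: "nat \<Rightarrow> nat list \<Rightarrow> bool" where
  "alt_desc_free d ws \<longleftrightarrow> (\<forall>i. 0 < i \<and> i < length ws \<longrightarrow> \<not> alt_desc d ws i)"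

definition alt_desc_free_beyond :: "nat \<Rightarrow> nat list \<Rightarrow> bool" where
  "alt_desc_free_beyond t ws \<longleftrightarrow> (\<forall>i. t < i \<and> i < length ws \<longrightarrow> \<not> alt_desc 0 ws i)"

definition word_altmaj :: "nat list \<Rightarrow> nat" where
  "word_altmaj ws = (\<Sum>i | 0 < i \<and> i < length ws \<and> alt_desc 0 ws i. i)"

lemma alt_desc_add_even: "even e \<Longrightarrow> alt_desc (d + e) ws i = alt_desc d ws i"
  by (auto simp: alt_desc_def)

lemma alt_desc_Suc:
  assumes "distinct ws" "0 < i" "i < length ws"
  shows "alt_desc (Suc d) ws i \<longleftrightarrow> \<not> alt_desc d ws i"
proof -
  have "ws ! (i - 1) \<noteq> ws ! i" using assms by (simp add: nth_eq_iff_index_eq)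
  then show ?thesis by (auto simp: alt_desc_def)
qed

lemma alt_desc_append_left:
  "0 < i \<Longrightarrow> i < length xs \<Longrightarrow> alt_desc d (xs @ ys) i = alt_desc d xs i"
  by (auto simp: alt_desc_def nth_append)

lemma alt_desc_append_right:
  assumes "length xs < i" "i < length xs + length ys"
  shows "alt_desc d (xs @ ys) i = alt_desc (d + length xs) ys (i - length xs)"
proof -
  have "(xs @ ys) ! (i - 1) = ys ! (i - length xs - 1)" "(xs @ ys) ! i = ys ! (i - length xs)"
    using assms by (auto simp: nth_append)
  moreover have "even (d + i) = even (d + length xs + (i - length xs))" using assms by simp
  ultimately show ?thesis unfolding alt_desc_def by presburger
qed

lemma alt_desc_free_append:
  "alt_desc_free d (xs @ ys) \<longleftrightarrow> alt_desc_free d xs \<and> alt_desc_free (d + length xs) ys \<and>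
     (xs \<noteq> [] \<and> ys \<noteq> [] \<longrightarrow> \<not> alt_desc d (xs @ ys) (length xs))"
    (is "?free \<longleftrightarrow> ?left \<and> ?right \<and> ?junction")
proof -
  have shift: "alt_desc d (xs @ ys) (length xs + j) = alt_desc (d + length xs) ys j"
    if "0 < j" "j < length ys" for j
    using alt_desc_append_right[of xs "length xs + j" ys d] that by simp
  show ?thesis
  proof
    assume free: ?free
    then show "?left \<and> ?right \<and> ?junction"
      using alt_desc_append_left shift by (auto simp: alt_desc_free_def)
  next
    assume "?left \<and> ?right \<and> ?junction"
    then have left: ?left and right: ?right and junction: ?junction by auto
    show ?free
      unfolding alt_desc_free_def
    proof (intro allI impI)
      fix i assume i: "0 < i \<and> i < length (xs @ ys)"
      consider "i < length xs" | "i = length xs" | "length xs < i" by linarith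
      then show "\<not> alt_desc d (xs @ ys) i"
      proof cases
        case 1
        then show ?thesis using left i alt_desc_append_left by (auto simp: alt_desc_free_def)
      next
        case 2
        then show ?thesis using junction i by auto
      next
        case 3
        then show ?thesis using right i shift[of "i - length xs"] by (auto simp: alt_desc_free_def)
      qed
    qed
  qed
qed

lemma alt_desc_free_beyond_iff_drop:
  assumes "t \<le> length ws"
  shows "alt_desc_free_beyond t ws \<longleftrightarrow> alt_desc_free t (drop t ws)"
proof -
  have shift: "alt_desc 0 ws i = alt_desc t (drop t ws) (i - t)" if "t < i" "i < length ws" for i
    using alt_desc_append_right[of "take t ws" i "drop t ws" 0] that assms by (simp add: min_def)
  show ?thesis
    unfolding alt_desc_free_beyond_def alt_desc_free_def
  proof safe
    fix j assume all: "\<forall>i. t < i \<and> i < length ws \<longrightarrow> \<not> alt_desc 0 ws i"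
      and j: "0 < j" "j < length (drop t ws)" and desc: "alt_desc t (drop t ws) j"
    have "t < t + j" "t + j < length ws" using j by auto
    with all desc show False using shift[of "t + j"] by auto
  next
    fix i assume "\<forall>j. 0 < j \<and> j < length (drop t ws) \<longrightarrow> \<not> alt_desc t (drop t ws) j"
      "t < i" "i < length ws" "alt_desc 0 ws i"
    then show False using shift[of i] by auto
  qed
qed

lemma alt_desc_free_beyond_snoc:
  "t < length ws \<Longrightarrow> alt_desc_free_beyond t (ws @ [x]) \<longleftrightarrow>
     alt_desc_free_beyond t ws \<and> \<not> alt_desc 0 (ws @ [x]) (length ws)"
  unfolding alt_desc_free_beyond_def by (auto simp: alt_desc_append_left less_Suc_eq)

lemma word_altmaj_snoc:
  assumes "ws \<noteq> []"
  shows "word_altmaj (ws @ [x]) =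
           word_altmaj ws + (if alt_desc 0 (ws @ [x]) (length ws) then length ws else 0)"
proof -
  have "{i. 0 < i \<and> i < length (ws @ [x]) \<and> alt_desc 0 (ws @ [x]) i} =
        {i. 0 < i \<and> i < length ws \<and> alt_desc 0 ws i} \<union>
        (if alt_desc 0 (ws @ [x]) (length ws) then {length ws} else {})"
    using assms by (auto simp: alt_desc_append_left less_Suc_eq)
  then show ?thesis
    unfolding word_altmaj_def by (simp add: sum.union_disjoint)
qed

lemma word_altmaj_eq_0_iff: "word_altmaj ws = 0 \<longleftrightarrow> alt_desc_free 0 ws"
  unfolding word_altmaj_def alt_desc_free_def by auto

text \<open>For \<open>t\<close> at least the last alternating descent of \<open>ws\<close> the summand is
  \<open>q ^ word_altmaj ws\<close> times a term of a telescoping sum of value 1; for smaller \<open>t\<close> it vanishes.\<close>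

lemma power_word_altmaj_expansion:
  fixes q :: "'a::comm_ring_1"
  assumes "ws \<noteq> []"
  shows "q ^ word_altmaj ws = (\<Sum>t<length ws. of_bool (alt_desc_free_beyond t ws) *
           (\<Prod>i\<in>{t<..<length ws}. 1 - q ^ i) * q ^ t * q ^ word_altmaj (take t ws))"
  using assms
proof (induction ws rule: rev_induct)
  case (snoc x ws)
  show ?case
  proof (cases "ws = []")
    case True
    have "word_altmaj [x] = 0" "word_altmaj [] = 0"
      unfolding word_altmaj_eq_0_iff alt_desc_free_def by simp_all
    with True show ?thesis by (simp add: alt_desc_free_beyond_def)
  next
    case False
    let ?m = "length ws"
    have old_terms: "of_bool (alt_desc_free_beyond t (ws @ [x])) *
          (\<Prod>i\<in>{t<..<Suc ?m}. 1 - q ^ i) * q ^ t * q ^ word_altmaj (take t (ws @ [x])) =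
        (if alt_desc 0 (ws @ [x]) ?m then 0 else 1 - q ^ ?m) *
          (of_bool (alt_desc_free_beyond t ws) *
          (\<Prod>i\<in>{t<..<?m}. 1 - q ^ i) * q ^ t * q ^ word_altmaj (take t ws))" if "t < ?m" for t
    proof -
      have "{t<..<Suc ?m} = insert ?m {t<..<?m}" using that by auto
      then show ?thesis using that by (simp add: alt_desc_free_beyond_snoc)
    qed
    have last_term: "alt_desc_free_beyond ?m (ws @ [x])"
      by (auto simp: alt_desc_free_beyond_def)
    have "(\<Sum>t<length (ws @ [x]). of_bool (alt_desc_free_beyond t (ws @ [x])) *
            (\<Prod>i\<in>{t<..<length (ws @ [x])}. 1 - q ^ i) * q ^ t * q ^ word_altmaj (take t (ws @ [x])))
        = (\<Sum>t<?m. of_bool (alt_desc_free_beyond t (ws @ [x])) *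
            (\<Prod>i\<in>{t<..<Suc ?m}. 1 - q ^ i) * q ^ t * q ^ word_altmaj (take t (ws @ [x])))
          + q ^ ?m * q ^ word_altmaj ws"
    proof -
      have "{?m<..<Suc ?m} = {}" by auto
      then show ?thesis using last_term by simp
    qed
    also have "\<dots> = (if alt_desc 0 (ws @ [x]) ?m then 0 else 1 - q ^ ?m) * q ^ word_altmaj ws
            + q ^ ?m * q ^ word_altmaj ws"
      unfolding snoc.IH[OF False] sum_distrib_left using old_terms by simp
    also have "\<dots> = q ^ word_altmaj (ws @ [x])"
      using False by (simp add: word_altmaj_snoc power_add algebra_simps)
    finally show ?thesis ..
  qed
qed simp

lemma word_altmaj_le: "word_altmaj ws \<le> (\<Sum>i | 0 < i \<and> i < length ws. i)"
  unfolding word_altmaj_def by (rule sum_mono2) auto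

lemma alt_desc_free_add_even: "even e \<Longrightarrow> alt_desc_free (d + e) ws = alt_desc_free d ws"
  by (simp add: alt_desc_free_def alt_desc_add_even)

lemma alt_desc_map_strict_mono:
  assumes "strict_mono_on A f" "set ws \<subseteq> A" "0 < i" "i < length ws"
  shows "alt_desc d (map f ws) i = alt_desc d ws i"
proof -
  have "ws ! (i - 1) \<in> A" "ws ! i \<in> A" using assms by (auto simp: subset_iff)
  then show ?thesis
    using assms(3,4) strict_mono_on_less[OF assms(1)] by (auto simp: alt_desc_def)
qed

lemma alt_desc_map_strict_antimono:
  assumes "strict_antimono_on A f" "set ws \<subseteq> A" "distinct ws" "0 < i" "i < length ws"
  shows "alt_desc d (map f ws) i = alt_desc (Suc d) ws i"
proof -
  have A: "ws ! (i - 1) \<in> A" "ws ! i \<in> A" using assms by (auto simp: subset_iff)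
  have "ws ! (i - 1) \<noteq> ws ! i" using assms by (simp add: nth_eq_iff_index_eq)
  then show ?thesis
    using assms(4,5) monotone_onD[OF assms(1) A] monotone_onD[OF assms(1) A(2,1)]
    by (auto simp: alt_desc_def)
qed

lemma alt_desc_free_map_strict_mono:
  "strict_mono_on A f \<Longrightarrow> set ws \<subseteq> A \<Longrightarrow> alt_desc_free d (map f ws) = alt_desc_free d ws"
  by (simp add: alt_desc_free_def alt_desc_map_strict_mono)

lemma alt_desc_free_map_strict_antimono:
  "strict_antimono_on A f \<Longrightarrow> set ws \<subseteq> A \<Longrightarrow> distinct ws \<Longrightarrow>
     alt_desc_free d (map f ws) = alt_desc_free (Suc d) ws"
  by (simp add: alt_desc_free_def alt_desc_map_strict_antimono)

lemma word_altmaj_map_strict_mono: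
  assumes "strict_mono_on A f" "set ws \<subseteq> A"
  shows "word_altmaj (map f ws) = word_altmaj ws"
  unfolding word_altmaj_def
  by (intro sum.cong refl Collect_cong) (auto simp: alt_desc_map_strict_mono[OF assms])

lemma word_altmaj_map_strict_antimono:
  assumes "strict_antimono_on A f" "set ws \<subseteq> A" "distinct ws"
  shows "word_altmaj (map f ws) = (\<Sum>i | 0 < i \<and> i < length ws. i) - word_altmaj ws"
proof -
  have "{i. 0 < i \<and> i < length (map f ws) \<and> alt_desc 0 (map f ws) i} =
        {i. 0 < i \<and> i < length ws} - {i. 0 < i \<and> i < length ws \<and> alt_desc 0 ws i}"
    using assms by (auto simp: alt_desc_map_strict_antimono alt_desc_Suc)
  moreover have sub: "{i. 0 < i \<and> i < length ws \<and> alt_desc 0 ws i} \<subseteq> {i. 0 < i \<and> i < length ws}"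
    by auto
  ultimately show ?thesis
    unfolding word_altmaj_def using sum_diff_nat[OF finite_subset[OF sub] sub] by simp
qed

lemma sum_permutations_of_set_image:
  assumes "inj_on f A"
  shows "(\<Sum>ws\<in>permutations_of_set (f ` A). g ws) = (\<Sum>ws\<in>permutations_of_set A. g (map f ws))"
proof -
  have "inj_on (map f) (permutations_of_set A)"
    using assms by (auto simp: inj_on_def permutations_of_set_def map_inj_on)
  then show ?thesis
    by (simp add: permutations_of_set_image_inj[OF assms] sum.reindex)
qed

lemma sum_permutations_of_set_reverse:
  "(\<Sum>ws\<in>permutations_of_set {1..n}. g ws) =
     (\<Sum>ws\<in>permutations_of_set {1..n}. g (map (\<lambda>x. Suc n - x) ws))"
proof -
  have "(\<lambda>x. Suc n - x) ` {1..n} = {1..n}"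
  proof (intro subset_antisym subsetI)
    fix x assume "x \<in> {1..n}"
    then have "x = Suc n - (Suc n - x)" "Suc n - x \<in> {1..n}" by auto
    then show "x \<in> (\<lambda>x. Suc n - x) ` {1..n}" by blast
  qed auto
  moreover have "inj_on (\<lambda>x. Suc n - x) {1..n}"
    by (auto simp: inj_on_def)
  ultimately show ?thesis
    using sum_permutations_of_set_image[of "\<lambda>x. Suc n - x" "{1..n}" g] by simp
qed

lemma strict_antimono_on_reverse: "strict_antimono_on {1..n} (\<lambda>x. Suc n - x)"
  by (auto intro: monotone_onI)

lemma ex_strict_mono_on_onto:
  fixes K :: "'a::linorder set"
  assumes "finite K"
  shows "\<exists>f. strict_mono_on {1..card K} f \<and> f ` {1..card K} = K"
proof -
  let ?xs = "sorted_list_of_set K"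
  have "strict_mono_on {1..card K} (\<lambda>i. ?xs ! (i - 1))"
    by (intro monotone_onI sorted_wrt_nth_less[OF strict_sorted_list_of_set]) auto
  moreover have "(\<lambda>i. ?xs ! (i - 1)) ` {1..card K} = K"
  proof -
    have "(\<lambda>i. ?xs ! (i - 1)) ` {1..card K} = (\<lambda>i. ?xs ! (i - 1)) ` Suc ` {..<card K}"
      by (simp only: image_Suc_lessThan)
    also have "\<dots> = (!) ?xs ` {..<length ?xs}"
      by (simp add: image_image)
    also have "\<dots> = K"
      using assms nth_image[of "length ?xs" ?xs] by (simp add: atLeast0LessThan)
    finally show ?thesis .
  qed
  ultimately show ?thesis by blast
qed

lemma sum_permutations_of_set_relabel:
  assumes "finite K" and invariant: "\<And>f ws. strict_mono_on (set ws) f \<Longrightarrow> g (map f ws) = g ws"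
  shows "(\<Sum>ws\<in>permutations_of_set K. g ws) = (\<Sum>ws\<in>permutations_of_set {1..card K}. g ws)"
proof -
  obtain f where f: "strict_mono_on {1..card K} f" "f ` {1..card K} = K"
    using ex_strict_mono_on_onto[OF assms(1)] by blast
  have "(\<Sum>ws\<in>permutations_of_set K. g ws) = (\<Sum>ws\<in>permutations_of_set (f ` {1..card K}). g ws)"
    using f(2) by simp
  also have "\<dots> = (\<Sum>ws\<in>permutations_of_set {1..card K}. g (map f ws))"
    using strict_mono_on_imp_inj_on[OF f(1)] by (rule sum_permutations_of_set_image)
  also have "\<dots> = (\<Sum>ws\<in>permutations_of_set {1..card K}. g ws)"
    by (intro sum.cong refl invariant monotone_on_subset[OF f(1)])
      (simp add: permutations_of_set_def)
  finally show ?thesis .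
qed

section \<open>Permutations as words, Euler numbers\<close>

lemma bij_betw_permutes_words:
  "bij_betw (\<lambda>p. map p [1..<Suc n]) {p. p permutes {1..n}} (permutations_of_set {1..n})"
  unfolding bij_betw_def
proof (intro conjI inj_onI subset_antisym subsetI)
  fix p p' assume p: "p \<in> {p. p permutes {1..n}}" and p': "p' \<in> {p. p permutes {1..n}}"
    and eq: "map p [1..<Suc n] = map p' [1..<Suc n]"
  show "p = p'"
  proof
    fix x
    show "p x = p' x"
    proof (cases "x \<in> {1..n}")
      case True
      then have "x \<in> set [1..<Suc n]" by auto
      then show ?thesis using eq by (simp only: map_eq_conv)
    next
      case False
      then show ?thesis using p p' by (simp add: permutes_not_in)
    qed
  qed
next
  have id_word: "[1..<Suc n] \<in> permutations_of_set {1..n}"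
    by (simp add: permutations_of_set_def atLeastLessThanSuc_atLeastAtMost del: upt_Suc)
  fix ws assume "ws \<in> (\<lambda>p. map p [1..<Suc n]) ` {p. p permutes {1..n}}"
  then obtain p where "p permutes {1..n}" "ws = map p [1..<Suc n]" by blast
  then show "ws \<in> permutations_of_set {1..n}"
    using permutations_of_set_image_permutes id_word by blast
next
  fix ws assume ws: "ws \<in> permutations_of_set {1..n}"
  have len: "length ws = n" using length_finite_permutations_of_set[OF ws] by simp
  define p where "p i = (if i \<in> {1..n} then ws ! (i - 1) else i)" for i
  have "bij_betw ((!) ws \<circ> (\<lambda>i. i - 1)) {1..n} (set ws)"
  proof (rule bij_betw_trans)
    show "bij_betw (\<lambda>i. i - 1) {1..n} {..<n}"
      by (rule bij_betw_byWitness[where f' = Suc]) auto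
    show "bij_betw ((!) ws) {..<n} (set ws)"
      using ws len by (intro bij_betw_nth) (auto simp: permutations_of_set_def)
  qed
  then have "bij_betw p {1..n} (set ws)"
    by (rule bij_betw_cong[THEN iffD1, rotated]) (simp add: p_def)
  then have "p permutes {1..n}"
    using permutations_of_setD(1)[OF ws] by (intro bij_imp_permutes) (auto simp: p_def)
  moreover have "map p [1..<Suc n] = ws"
    by (rule nth_equalityI) (simp_all add: len p_def nth_upt del: upt_Suc)
  ultimately show "ws \<in> (\<lambda>p. map p [1..<Suc n]) ` {p. p permutes {1..n}}" by blast
qed

lemma alt_desc_permutation_word:
  assumes "0 < i" "i < n"
  shows "alt_desc d (map p [1..<Suc n]) i \<longleftrightarrow>
           (even (d + i) \<and> p i < p (i + 1)) \<or> (odd (d + i) \<and> p i > p (i + 1))"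
  using assms by (simp add: alt_desc_def nth_upt del: upt_Suc)

lemma altmaj_eq_word_altmaj: "altmaj n p = word_altmaj (map p [1..<Suc n])"
proof -
  have "i \<in> alt_descent_set n p \<longleftrightarrow> 0 < i \<and> i < n \<and> alt_desc 0 (map p [1..<Suc n]) i" for i
  proof (cases "0 < i \<and> i < n")
    case True
    then show ?thesis
      unfolding alt_descent_set_def alt_desc_permutation_word[OF conjunct1[OF True] conjunct2[OF True]]
      by auto
  qed (auto simp: alt_descent_set_def)
  then have "alt_descent_set n p =
               {i. 0 < i \<and> i < length (map p [1..<Suc n]) \<and> alt_desc 0 (map p [1..<Suc n]) i}"
    by (auto simp del: upt_Suc)
  then show ?thesis by (simp add: altmaj_def word_altmaj_def del: upt_Suc)
qed

lemma down_up_iff_alt_desc_free: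
  assumes "p permutes {1..n}"
  shows "down_up n p \<longleftrightarrow> alt_desc_free 1 (map p [1..<Suc n])"
proof -
  have distinct_neighbours: "p i \<noteq> p (i + 1)" for i
    using permutes_inj[OF assms] by (metis inj_eq n_not_Suc_n Suc_eq_plus1)
  have step: "(odd i \<longrightarrow> p i > p (i + 1)) \<and> (even i \<longrightarrow> p i < p (i + 1)) \<longleftrightarrow>
             \<not> alt_desc 1 (map p [1..<Suc n]) i" if "0 < i" "i < n" for i
    unfolding alt_desc_permutation_word[OF that] using distinct_neighbours[of i] by auto
  have "{1..n - 1} = {i. 0 < i \<and> i < n}" by auto
  then show ?thesis
    unfolding down_up_def alt_desc_free_def using step by (simp del: upt_Suc)
qed

lemma sum_permutes_altmaj:
  "(\<Sum>p\<in>{p. p permutes {1..n}}. g (altmaj n p)) =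
     (\<Sum>ws\<in>permutations_of_set {1..n}. g (word_altmaj ws))"
  unfolding altmaj_eq_word_altmaj
  by (rule sum.reindex_bij_betw[OF bij_betw_permutes_words])

definition altmaj_gen :: "nat set \<Rightarrow> 'a::comm_semiring_1 \<Rightarrow> 'a" where
  "altmaj_gen K q = (\<Sum>ws\<in>permutations_of_set K. q ^ word_altmaj ws)"

definition alt_desc_free_count :: "nat \<Rightarrow> nat set \<Rightarrow> nat" where
  "alt_desc_free_count d K = card {ws \<in> permutations_of_set K. alt_desc_free d ws}"

lemma alt_desc_free_count_eq_sum:
  "of_nat (alt_desc_free_count d K) = (\<Sum>ws\<in>permutations_of_set K. of_bool (alt_desc_free d ws))"
  unfolding alt_desc_free_count_def of_bool_def
  by (simp add: sum.inter_filter[symmetric])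

lemma euler_number_eq_count: "euler_number n = alt_desc_free_count 1 {1..n}"
proof -
  let ?word = "\<lambda>p. map p [1..<Suc n]"
  let ?down_up = "{p. p permutes {1..n} \<and> down_up n p}"
  note bij = bij_betw_permutes_words[of n]
  have image: "?word ` ?down_up = {ws \<in> permutations_of_set {1..n}. alt_desc_free 1 ws}"
  proof (intro subset_antisym subsetI)
    fix ws assume "ws \<in> ?word ` ?down_up"
    then obtain p where p: "p permutes {1..n}" "down_up n p" and ws: "ws = ?word p" by blast
    have "ws \<in> permutations_of_set {1..n}"
      using bij_betwE[OF bij] p(1) ws by blast
    moreover have "alt_desc_free 1 ws"
      using down_up_iff_alt_desc_free[OF p(1)] p(2) ws by simp
    ultimately show "ws \<in> {ws \<in> permutations_of_set {1..n}. alt_desc_free 1 ws}" by simp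
  next
    fix ws assume ws: "ws \<in> {ws \<in> permutations_of_set {1..n}. alt_desc_free 1 ws}"
    then obtain p where p: "p permutes {1..n}" and ws_eq: "ws = ?word p"
      using bij_betw_imp_surj_on[OF bij] by (metis (no_types, lifting) imageE mem_Collect_eq)
    then have "down_up n p"
      using down_up_iff_alt_desc_free[OF p] ws by simp
    with p ws_eq show "ws \<in> ?word ` ?down_up" by blast
  qed
  have "inj_on ?word ?down_up"
    using bij_betw_imp_inj_on[OF bij] by (rule inj_on_subset) blast
  then show ?thesis
    unfolding euler_number_def alt_desc_free_count_def image[symmetric] by (rule card_image[symmetric])
qed

lemma altmaj_gen_relabel: "finite K \<Longrightarrow> altmaj_gen K q = altmaj_gen {1..card K} q"
  unfolding altmaj_gen_def
  by (rule sum_permutations_of_set_relabel) (simp_all add: word_altmaj_map_strict_mono[OF _ subset_refl])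

lemma alt_desc_free_count_relabel:
  "finite K \<Longrightarrow> alt_desc_free_count d K = alt_desc_free_count d {1..card K}"
  unfolding alt_desc_free_count_eq_sum[where 'a = nat, unfolded of_nat_id]
  by (rule sum_permutations_of_set_relabel) (auto simp: alt_desc_free_map_strict_mono)

lemma alt_desc_free_count_Suc:
  "alt_desc_free_count (Suc d) {1..n} = alt_desc_free_count d {1..n}"
proof -
  have "alt_desc_free_count d {1..n} =
          (\<Sum>ws\<in>permutations_of_set {1..n}. of_bool (alt_desc_free d (map (\<lambda>x. Suc n - x) ws)))"
    unfolding alt_desc_free_count_eq_sum[where 'a = nat, unfolded of_nat_id]
    by (rule sum_permutations_of_set_reverse)
  also have "\<dots> = alt_desc_free_count (Suc d) {1..n}"
    unfolding alt_desc_free_count_eq_sum[where 'a = nat, unfolded of_nat_id]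
    by (intro sum.cong refl) (auto simp: permutations_of_set_def
        alt_desc_free_map_strict_antimono[OF strict_antimono_on_reverse])
  finally show ?thesis ..
qed

lemma alt_desc_free_count_eq_euler_number:
  assumes "finite K"
  shows "alt_desc_free_count d K = euler_number (card K)"
proof -
  have "alt_desc_free d ws = alt_desc_free (d mod 2) ws" for ws
    using alt_desc_free_add_even[of "2 * (d div 2)" "d mod 2" ws] by simp
  then have "alt_desc_free_count d {1..n} = alt_desc_free_count (d mod 2) {1..n}" for n
    by (simp add: alt_desc_free_count_def)
  moreover have "alt_desc_free_count (d mod 2) {1..n} = alt_desc_free_count 1 {1..n}" for n
  proof (cases "even d")
    case True
    then have "d mod 2 = 0" by presburger
    then show ?thesis using alt_desc_free_count_Suc[of 0 n] by simp
  next
    case False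
    then have "d mod 2 = 1" by presburger
    then show ?thesis by simp
  qed
  ultimately show ?thesis
    using alt_desc_free_count_relabel[OF assms] by (simp add: euler_number_eq_count)
qed

section \<open>Recurrences\<close>

lemma bij_betw_take_drop_permutations_of_set:
  assumes "k \<le> card S"
  shows "bij_betw (\<lambda>ws. (take k ws, drop k ws)) (permutations_of_set S)
           (\<Union>K\<in>{K. K \<subseteq> S \<and> card K = k}. permutations_of_set K \<times> permutations_of_set (S - K))"
proof (rule bij_betw_imageI)
  show "inj_on (\<lambda>ws. (take k ws, drop k ws)) (permutations_of_set S)"
  proof (rule inj_onI)
    fix ws ws' assume "(take k ws, drop k ws) = (take k ws', drop k ws')"
    then have "take k ws @ drop k ws = take k ws' @ drop k ws'" by simp
    then show "ws = ws'" by simp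
  qed
next
  show "(\<lambda>ws. (take k ws, drop k ws)) ` permutations_of_set S =
          (\<Union>K\<in>{K. K \<subseteq> S \<and> card K = k}. permutations_of_set K \<times> permutations_of_set (S - K))"
  proof (intro subset_antisym subsetI)
    fix p assume "p \<in> (\<lambda>ws. (take k ws, drop k ws)) ` permutations_of_set S"
    then obtain ws where ws: "ws \<in> permutations_of_set S" and p: "p = (take k ws, drop k ws)"
      by blast
    have d: "distinct ws" "set ws = S" and len: "length ws = card S"
      using ws by (simp_all add: permutations_of_set_def length_finite_permutations_of_set)
    let ?K = "set (take k ws)"
    have "?K \<union> set (drop k ws) = S" "?K \<inter> set (drop k ws) = {}"
      using d set_take_disj_set_drop_if_distinct[of ws k k] by (simp_all flip: set_append)
    then have "set (drop k ws) = S - ?K" by blast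
    then have "take k ws \<in> permutations_of_set ?K" "drop k ws \<in> permutations_of_set (S - ?K)"
      using d by (simp_all add: permutations_of_set_def)
    moreover have "?K \<subseteq> S" using d(2) set_take_subset[of k ws] by simp
    moreover have "card ?K = k" using d len assms by (simp add: distinct_card)
    ultimately show "p \<in> (\<Union>K\<in>{K. K \<subseteq> S \<and> card K = k}.
                            permutations_of_set K \<times> permutations_of_set (S - K))"
      using p by blast
  next
    fix p assume "p \<in> (\<Union>K\<in>{K. K \<subseteq> S \<and> card K = k}.
                          permutations_of_set K \<times> permutations_of_set (S - K))"
    then obtain K xs ys where K: "K \<subseteq> S" "card K = k" and xs: "xs \<in> permutations_of_set K"
      and ys: "ys \<in> permutations_of_set (S - K)" and p: "p = (xs, ys)"
      by blast
    have "length xs = k" using xs K by (simp add: length_finite_permutations_of_set)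
    then have "p = (take k (xs @ ys), drop k (xs @ ys))" using p by simp
    moreover have "xs @ ys \<in> permutations_of_set S"
      using xs ys K by (auto simp: permutations_of_set_def)
    ultimately show "p \<in> (\<lambda>ws. (take k ws, drop k ws)) ` permutations_of_set S"
      by blast
  qed
qed

lemma sum_permutations_of_set_take_drop:
  assumes "finite S" "k \<le> card S"
  shows "(\<Sum>ws\<in>permutations_of_set S. G (take k ws) (drop k ws)) =
         (\<Sum>K | K \<subseteq> S \<and> card K = k. \<Sum>xs\<in>permutations_of_set K.
            \<Sum>ys\<in>permutations_of_set (S - K). G xs ys)"
proof -
  have "finite {K. K \<subseteq> S \<and> card K = k}"
    using assms(1) by (simp add: finite_subset[of _ "Pow S"] subset_iff)
  moreover have "disjoint_family_on (\<lambda>K. permutations_of_set K \<times> permutations_of_set (S - K))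
                   {K. K \<subseteq> S \<and> card K = k}"
    by (auto simp: disjoint_family_on_def permutations_of_set_def)
  ultimately show ?thesis
    using sum.reindex_bij_betw[OF bij_betw_take_drop_permutations_of_set[OF assms(2)],
        of "\<lambda>(xs, ys). G xs ys"]
    by (simp add: sum.UNION_disjoint_family sum.cartesian_product)
qed

lemma sum_permutations_of_set_insert:
  assumes "finite A" "m \<notin> A"
  shows "(\<Sum>ws\<in>permutations_of_set (insert m A). G ws) =
           (\<Sum>k\<le>card A. \<Sum>vs\<in>permutations_of_set A. G (take k vs @ m # drop k vs))"
proof -
  let ?ins = "\<lambda>(k, vs). take k vs @ m # drop k vs"
  let ?del = "\<lambda>ws. (length (takeWhile (\<lambda>x. x \<noteq> m) ws), removeAll m ws)"
  have del_ins: "?del (?ins (k, vs)) = (k, vs)" and ins_mem: "?ins (k, vs) \<in> permutations_of_set (insert m A)"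
    if "k \<le> card A" "vs \<in> permutations_of_set A" for k vs
  proof -
    have vs: "distinct vs" "set vs = A" "length vs = card A"
      using that(2) by (auto simp: permutations_of_set_def length_finite_permutations_of_set)
    then have "m \<notin> set (take k vs)" "m \<notin> set (drop k vs)"
      using assms(2) by (auto dest: in_set_takeD in_set_dropD)
    moreover from this have "\<forall>x\<in>set (take k vs). x \<noteq> m" by blast
    ultimately show "?del (?ins (k, vs)) = (k, vs)"
      using that(1) vs by (simp add: takeWhile_append2 removeAll_id)
    show "?ins (k, vs) \<in> permutations_of_set (insert m A)"
      using vs \<open>m \<notin> set (take k vs)\<close> \<open>m \<notin> set (drop k vs)\<close>
        set_take_disj_set_drop_if_distinct[of vs k k]
      by (auto simp: permutations_of_set_def simp flip: set_append[of "take k vs"])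
  qed
  have ins_del: "?ins (?del ws) = ws" and del_mem: "?del ws \<in> {..card A} \<times> permutations_of_set A"
    if ws: "ws \<in> permutations_of_set (insert m A)" for ws
  proof -
    have "m \<in> set ws" using ws by (simp add: permutations_of_set_def)
    then obtain xs ys where split: "ws = xs @ m # ys" by (meson split_list)
    have d: "distinct ws" "set ws = insert m A" using ws by (simp_all add: permutations_of_set_def)
    then have "m \<notin> set xs" "m \<notin> set ys" using split by auto
    moreover from this have "\<forall>x\<in>set xs. x \<noteq> m" by blast
    ultimately have del: "?del ws = (length xs, xs @ ys)"
      using split by (simp add: takeWhile_append2 removeAll_id)
    then show "?ins (?del ws) = ws" using split by simp
    have "length ws = Suc (card A)"
      using length_finite_permutations_of_set[OF ws] assms by simp
    moreover have "xs @ ys \<in> permutations_of_set A"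
      using d split assms(2) \<open>m \<notin> set xs\<close> \<open>m \<notin> set ys\<close>
      by (auto simp: permutations_of_set_def)
    ultimately show "?del ws \<in> {..card A} \<times> permutations_of_set A"
      using del split by simp
  qed
  have "(\<Sum>ws\<in>permutations_of_set (insert m A). G ws) =
          (\<Sum>(k, vs)\<in>{..card A} \<times> permutations_of_set A. G (take k vs @ m # drop k vs))"
    by (rule sum.reindex_bij_witness[where i = ?ins and j = ?del])
      (use ins_del del_mem del_ins ins_mem in auto)
  then show ?thesis by (simp add: sum.cartesian_product)
qed

lemma alt_desc_free_Cons_greater:
  assumes "\<forall>z\<in>set zs. z < m"
  shows "alt_desc_free d (m # zs) \<longleftrightarrow> alt_desc_free (Suc d) zs \<and> (zs \<noteq> [] \<longrightarrow> odd d)"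
proof -
  have "zs \<noteq> [] \<Longrightarrow> alt_desc d (m # zs) 1 \<longleftrightarrow> even d"
    using assms by (cases zs) (auto simp: alt_desc_def)
  moreover have "alt_desc_free d [m]"
    by (simp add: alt_desc_free_def)
  ultimately show ?thesis
    using alt_desc_free_append[of d "[m]" zs] by auto
qed

lemma alt_desc_free_append_greater:
  assumes "\<forall>x\<in>set xs. x < m" "\<forall>z\<in>set zs. z < m"
  shows "alt_desc_free 1 (xs @ m # zs) \<longleftrightarrow>
           even (length xs) \<and> alt_desc_free 1 xs \<and> alt_desc_free (length xs) zs"
proof -
  have junction: "alt_desc 1 (xs @ m # zs) (length xs) \<longleftrightarrow> odd (length xs)" if "xs \<noteq> []"
  proof -
    have "(xs @ m # zs) ! (length xs - 1) = xs ! (length xs - 1)"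
      using that by (simp add: nth_append)
    moreover have "xs ! (length xs - 1) \<in> set xs" using that by simp
    ultimately show ?thesis using assms(1) by (auto simp: alt_desc_def nth_append)
  qed
  have "alt_desc_free (1 + length xs) (m # zs) \<longleftrightarrow>
          alt_desc_free (length xs) zs \<and> (zs \<noteq> [] \<longrightarrow> even (length xs))"
    using alt_desc_free_Cons_greater[OF assms(2), of "1 + length xs"]
      alt_desc_free_add_even[of 2 "length xs" zs] by simp
  then show ?thesis
    using alt_desc_free_append[of 1 xs "m # zs"] junction by (cases "xs = []") auto
qed

lemma euler_number_0: "euler_number 0 = 1"
proof -
  have "{ws \<in> permutations_of_set {1..0}. alt_desc_free 1 ws} = {[]}"
    by (auto simp: alt_desc_free_def)
  then show ?thesis by (simp add: euler_number_eq_count alt_desc_free_count_def)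
qed

lemma sum_alt_desc_free_split_at_max:
  assumes "finite A" "K \<subseteq> A" "\<forall>x\<in>A. x < m"
  shows "(\<Sum>xs\<in>permutations_of_set K. \<Sum>zs\<in>permutations_of_set (A - K).
            of_bool (alt_desc_free 1 (xs @ m # zs)) :: nat) =
         of_bool (even (card K)) * (euler_number (card K) * euler_number (card A - card K))"
proof -
  have fin: "finite K" "finite (A - K)" using assms(1,2) finite_subset by auto
  have "(\<Sum>xs\<in>permutations_of_set K. \<Sum>zs\<in>permutations_of_set (A - K).
            of_bool (alt_desc_free 1 (xs @ m # zs)) :: nat) =
        (\<Sum>xs\<in>permutations_of_set K. \<Sum>zs\<in>permutations_of_set (A - K). of_bool (even (card K)) *
            (of_bool (alt_desc_free 1 xs) * of_bool (alt_desc_free (card K) zs)))"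
  proof (intro sum.cong refl)
    fix xs zs assume xs: "xs \<in> permutations_of_set K" and zs: "zs \<in> permutations_of_set (A - K)"
    have "\<forall>x\<in>set xs. x < m" "\<forall>z\<in>set zs. z < m"
      using xs zs assms(2,3) by (auto simp: permutations_of_set_def)
    then show "of_bool (alt_desc_free 1 (xs @ m # zs)) = (of_bool (even (card K)) :: nat) *
                 (of_bool (alt_desc_free 1 xs) * of_bool (alt_desc_free (card K) zs))"
      using alt_desc_free_append_greater[of xs m zs] length_finite_permutations_of_set[OF xs]
      by simp
  qed
  also have "\<dots> = of_bool (even (card K)) *
                     (alt_desc_free_count 1 K * alt_desc_free_count (card K) (A - K))"
    unfolding alt_desc_free_count_eq_sum[where 'a = nat, unfolded of_nat_id] sum_product
    unfolding sum_distrib_left ..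
  also have "\<dots> = of_bool (even (card K)) * (euler_number (card K) * euler_number (card A - card K))"
    using fin assms(2) by (simp add: alt_desc_free_count_eq_euler_number card_Diff_subset)
  finally show ?thesis .
qed

lemma euler_number_recurrence:
  "euler_number (Suc n) =
     (\<Sum>k\<le>n. if even k then (n choose k) * euler_number k * euler_number (n - k) else 0)"
proof -
  let ?m = "Suc n" and ?A = "{1..n}"
  have "euler_number (Suc n) =
          (\<Sum>ws\<in>permutations_of_set (insert ?m ?A). of_bool (alt_desc_free 1 ws))"
    by (simp add: euler_number_eq_count alt_desc_free_count_eq_sum[where 'a = nat, unfolded of_nat_id]
        atLeastAtMostSuc_conv)
  also have "\<dots> = (\<Sum>k\<le>n. \<Sum>vs\<in>permutations_of_set ?A.
                      of_bool (alt_desc_free 1 (take k vs @ ?m # drop k vs)))"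
    by (subst sum_permutations_of_set_insert) auto
  also have "\<dots> = (\<Sum>k\<le>n. \<Sum>K | K \<subseteq> ?A \<and> card K = k. \<Sum>xs\<in>permutations_of_set K.
                      \<Sum>zs\<in>permutations_of_set (?A - K). of_bool (alt_desc_free 1 (xs @ ?m # zs)))"
    by (intro sum.cong refl sum_permutations_of_set_take_drop) auto
  also have "\<dots> = (\<Sum>k\<le>n. \<Sum>K | K \<subseteq> ?A \<and> card K = k.
                      of_bool (even k) * (euler_number k * euler_number (n - k)))"
    by (intro sum.cong refl, subst sum_alt_desc_free_split_at_max) auto
  also have "\<dots> = (\<Sum>k\<le>n. if even k then (n choose k) * euler_number k * euler_number (n - k) else 0)"
    by (intro sum.cong refl) (simp add: n_subsets)
  finally show ?thesis .
qed

lemma euler_number_pos: "0 < euler_number n"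
proof (induction n)
  case (Suc n)
  let ?term = "\<lambda>k. if even k then (n choose k) * euler_number k * euler_number (n - k) else 0"
  have "?term 0 \<le> sum ?term {..n}"
    by (rule member_le_sum) auto
  then show ?case
    using Suc by (simp add: euler_number_recurrence euler_number_0)
qed (simp add: euler_number_0)

lemma sum_alt_desc_free_beyond:
  fixes q :: "'a::comm_ring_1"
  assumes "t \<le> n"
  shows "(\<Sum>ws\<in>permutations_of_set {1..n}.
            of_bool (alt_desc_free_beyond t ws) * q ^ word_altmaj (take t ws)) =
         of_nat (n choose t) * of_nat (euler_number (n - t)) * altmaj_gen {1..t} q"
proof -
  let ?S = "{1..n}"
  have "(\<Sum>ws\<in>permutations_of_set ?S.
            of_bool (alt_desc_free_beyond t ws) * q ^ word_altmaj (take t ws)) =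
        (\<Sum>ws\<in>permutations_of_set ?S.
            q ^ word_altmaj (take t ws) * of_bool (alt_desc_free t (drop t ws)))"
    using assms by (intro sum.cong refl)
      (simp add: alt_desc_free_beyond_iff_drop length_finite_permutations_of_set)
  also have "\<dots> = (\<Sum>K | K \<subseteq> ?S \<and> card K = t. \<Sum>xs\<in>permutations_of_set K.
                     \<Sum>ys\<in>permutations_of_set (?S - K). q ^ word_altmaj xs * of_bool (alt_desc_free t ys))"
    using assms by (intro sum_permutations_of_set_take_drop) auto
  also have "\<dots> = (\<Sum>K | K \<subseteq> ?S \<and> card K = t.
                      of_nat (euler_number (n - t)) * altmaj_gen {1..t} q)"
  proof (intro sum.cong refl)
    fix K assume "K \<in> {K. K \<subseteq> ?S \<and> card K = t}"
    then have K: "K \<subseteq> ?S" "card K = t" by auto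
    then have fin: "finite K" "finite (?S - K)" using finite_subset by auto
    have card: "card (?S - K) = n - t" using card_Diff_subset[OF fin(1) K(1)] K(2) by simp
    have "(\<Sum>xs\<in>permutations_of_set K. \<Sum>ys\<in>permutations_of_set (?S - K).
              q ^ word_altmaj xs * of_bool (alt_desc_free t ys)) =
          altmaj_gen K q * of_nat (alt_desc_free_count t (?S - K))"
      unfolding altmaj_gen_def alt_desc_free_count_eq_sum sum_product ..
    also have "\<dots> = of_nat (euler_number (n - t)) * altmaj_gen {1..t} q"
      unfolding altmaj_gen_relabel[OF fin(1)] alt_desc_free_count_eq_euler_number[OF fin(2)] K(2) card
      by (rule mult.commute)
    finally show "(\<Sum>xs\<in>permutations_of_set K. \<Sum>ys\<in>permutations_of_set (?S - K).
              q ^ word_altmaj xs * of_bool (alt_desc_free t ys)) =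
          of_nat (euler_number (n - t)) * altmaj_gen {1..t} q" .
  qed
  also have "\<dots> = of_nat (n choose t) * of_nat (euler_number (n - t)) * altmaj_gen {1..t} q"
    by (simp add: n_subsets)
  finally show ?thesis .
qed

lemma altmaj_gen_recurrence:
  fixes q :: "'a::comm_ring_1"
  assumes "1 \<le> n"
  shows "altmaj_gen {1..n} q =
           (\<Sum>t<n. of_nat (n choose t) * of_nat (euler_number (n - t)) * altmaj_gen {1..t} q *
                   q ^ t * (\<Prod>i\<in>{t<..<n}. 1 - q ^ i))"
proof -
  have "altmaj_gen {1..n} q =
          (\<Sum>ws\<in>permutations_of_set {1..n}. \<Sum>t<n. (\<Prod>i\<in>{t<..<n}. 1 - q ^ i) * q ^ t *
             (of_bool (alt_desc_free_beyond t ws) * q ^ word_altmaj (take t ws)))"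
    unfolding altmaj_gen_def
  proof (intro sum.cong refl)
    fix ws assume "ws \<in> permutations_of_set {1..n}"
    then have "length ws = n" by (simp add: length_finite_permutations_of_set)
    moreover from this have "ws \<noteq> []" using assms by auto
    ultimately show "q ^ word_altmaj ws = (\<Sum>t<n. (\<Prod>i\<in>{t<..<n}. 1 - q ^ i) * q ^ t *
                 (of_bool (alt_desc_free_beyond t ws) * q ^ word_altmaj (take t ws)))"
      using power_word_altmaj_expansion[of ws q] by (simp add: mult_ac)
  qed
  also have "\<dots> = (\<Sum>t<n. (\<Prod>i\<in>{t<..<n}. 1 - q ^ i) * q ^ t *
                    (\<Sum>ws\<in>permutations_of_set {1..n}.
                       of_bool (alt_desc_free_beyond t ws) * q ^ word_altmaj (take t ws)))"
    unfolding sum_distrib_left by (rule sum.swap)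
  also have "\<dots> = (\<Sum>t<n. of_nat (n choose t) * of_nat (euler_number (n - t)) * altmaj_gen {1..t} q *
                   q ^ t * (\<Prod>i\<in>{t<..<n}. 1 - q ^ i))"
    by (intro sum.cong refl, subst sum_alt_desc_free_beyond) (simp_all add: mult_ac)
  finally show ?thesis .
qed

section \<open>Generating functions\<close>

lemma fps_eq_0_if_q_dilation_eq:
  fixes U Y :: "'a::idom fps"
  assumes q: "\<And>n. q ^ Suc n \<noteq> 1" and Y0: "Y $ 0 = 1"
    and U: "U = fps_const q * Y * (U oo (fps_const q * fps_X))"
  shows "U = 0"
proof (rule fps_ext)
  fix n
  show "U $ n = 0 $ n"
  proof (induction n rule: less_induct)
    case (less n)
    have "U $ n = (fps_const q * (Y * (U oo (fps_const q * fps_X)))) $ n"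
      using U by (simp add: mult.assoc)
    also have "\<dots> = q * (Y * (U oo (fps_const q * fps_X))) $ n"
      by (rule fps_mult_left_const_nth)
    also have "\<dots> = q * (\<Sum>i=0..n. Y $ i * (q ^ (n - i) * U $ (n - i)))"
      by (simp add: fps_mult_nth)
    also have "\<dots> = q * (q ^ n * U $ n)"
      using less Y0 by (simp add: sum.atLeast_Suc_atMost)
    finally have "(1 - q ^ Suc n) * U $ n = 0"
      by (simp add: algebra_simps)
    then show ?case using q[of n] by simp
  qed
qed

text \<open>With \<open>F oo (fps_const q * fps_X)\<close> playing the role of \<open>F(qx)\<close>: the defect
  \<open>fps_deriv F - H * F\<close> satisfies the equation of the previous lemma, hence vanishes.\<close>

lemma fps_deriv_eq_mult_if_q_dilation_eqs:
  fixes F Y S H :: "'a::idom fps"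
  assumes q: "\<And>n. q ^ Suc n \<noteq> 1" and Y0: "Y $ 0 = 1"
    and F: "F = Y * (F oo (fps_const q * fps_X))"
    and Y: "fps_deriv Y = S * Y"
    and H: "H = S + fps_const q * (H oo (fps_const q * fps_X))"
  shows "fps_deriv F = H * F"
proof -
  let ?dil = "\<lambda>A. A oo (fps_const q * fps_X)"
  have dil_mult: "?dil (A * B) = ?dil A * ?dil B" for A B
    by (simp add: fps_compose_mult_distrib)
  have dil_deriv: "fps_deriv (?dil A) = fps_const q * ?dil (fps_deriv A)" for A
    by (simp add: fps_compose_deriv)
  have "fps_deriv F = fps_deriv (Y * ?dil F)"
    using arg_cong[OF F, of fps_deriv] .
  also have "\<dots> = Y * fps_deriv (?dil F) + fps_deriv Y * ?dil F"
    by (rule fps_deriv_mult)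
  also have "\<dots> = S * (Y * ?dil F) + fps_const q * Y * ?dil (fps_deriv F)"
    unfolding Y dil_deriv by (simp only: mult_ac add.commute)
  finally have deriv: "fps_deriv F = S * F + fps_const q * Y * ?dil (fps_deriv F)"
    unfolding F[symmetric] .
  have "H * F = S * F + fps_const q * ?dil H * F"
    using arg_cong[OF H, of "\<lambda>G. G * F"] by (simp add: algebra_simps)
  also have "\<dots> = S * F + fps_const q * ?dil H * (Y * ?dil F)"
    using arg_cong[where f = "\<lambda>G. S * F + fps_const q * ?dil H * G", OF F] .
  also have "\<dots> = S * F + fps_const q * Y * ?dil (H * F)"
    unfolding dil_mult by (simp only: mult_ac)
  finally have "H * F = S * F + fps_const q * Y * ?dil (H * F)" .
  with deriv have "fps_deriv F - H * F =
      (S * F + fps_const q * Y * ?dil (fps_deriv F)) - (S * F + fps_const q * Y * ?dil (H * F))"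
    by (rule arg_cong2[where f = minus])
  also have "\<dots> = fps_const q * Y * ?dil (fps_deriv F - H * F)"
    by (simp add: fps_compose_sub_distrib algebra_simps)
  finally have "fps_deriv F - H * F = fps_const q * Y * ?dil (fps_deriv F - H * F)" .
  then have "fps_deriv F - H * F = 0"
    by (rule fps_eq_0_if_q_dilation_eq[OF q Y0])
  then show ?thesis by simp
qed

definition q_pochhammer :: "'a::comm_ring_1 \<Rightarrow> nat \<Rightarrow> 'a" where
  "q_pochhammer q n = (\<Prod>i=1..n. 1 - q ^ i)"

lemma q_pochhammer_Suc: "q_pochhammer q (Suc n) = q_pochhammer q n * (1 - q ^ Suc n)"
  by (simp add: q_pochhammer_def)

lemma q_pochhammer_split:
  "t \<le> m \<Longrightarrow> q_pochhammer q m = q_pochhammer q t * (\<Prod>i\<in>{t<..m}. 1 - q ^ i)"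
proof -
  assume "t \<le> m"
  then have "{1..m} = {1..t} \<union> {t<..m}" "{1..t} \<inter> {t<..m} = {}" by auto
  then show ?thesis
    unfolding q_pochhammer_def by (simp add: prod.union_disjoint)
qed

lemma q_pochhammer_nonzero:
  fixes q :: "'a::idom"
  assumes "\<And>n. q ^ Suc n \<noteq> 1"
  shows "q_pochhammer q n \<noteq> 0"
proof -
  have "1 - q ^ i \<noteq> 0" if i: "i \<in> {1..n}" for i
  proof -
    obtain j where "i = Suc j" using i by (cases i) auto
    then show ?thesis using assms[of j] by simp
  qed
  then show ?thesis unfolding q_pochhammer_def by simp
qed

text \<open>\<open>euler_egf\<close> is \<open>sec x + tan x\<close> and \<open>euler_even_egf\<close> its even part
  \<open>sec x\<close>.\<close>

definition euler_egf :: "'a::field_char_0 fps" where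
  "euler_egf = Abs_fps (\<lambda>n. of_nat (euler_number n) / fact n)"

definition euler_even_egf :: "'a::field_char_0 fps" where
  "euler_even_egf = Abs_fps (\<lambda>n. if even n then of_nat (euler_number n) / fact n else 0)"

definition altmaj_egf :: "'a::field_char_0 \<Rightarrow> 'a fps" where
  "altmaj_egf q = Abs_fps (\<lambda>n. altmaj_gen {1..n} q / (fact n * q_pochhammer q n))"

lemma fps_deriv_euler_egf:
  "fps_deriv (euler_egf :: 'a::field_char_0 fps) = euler_even_egf * euler_egf"
proof (rule fps_ext)
  fix n
  have "fps_deriv (euler_egf :: 'a fps) $ n = of_nat (euler_number (Suc n)) / fact n"
    by (simp add: euler_egf_def fact_Suc del: of_nat_Suc)
  also have "\<dots> = (\<Sum>k=0..n. (if even k then of_nat (n choose k) * of_nat (euler_number k) *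
                                  of_nat (euler_number (n - k)) else 0) / fact n)"
    by (simp add: euler_number_recurrence atMost_atLeast0 sum_divide_distrib of_nat_sum if_distrib
        cong: if_cong)
  also have "\<dots> = (euler_even_egf * euler_egf) $ n"
    unfolding fps_mult_nth
  proof (intro sum.cong refl)
    fix k assume "k \<in> {0..n}"
    then have "of_nat (n choose k) = (fact n / (fact k * fact (n - k)) :: 'a)"
      by (simp add: binomial_fact)
    then show "(if even k then of_nat (n choose k) * of_nat (euler_number k) *
                  of_nat (euler_number (n - k)) else 0) / fact n =
               euler_even_egf $ k * (euler_egf :: 'a fps) $ (n - k)"
      by (simp add: euler_even_egf_def euler_egf_def field_simps)
  qed
  finally show "fps_deriv (euler_egf :: 'a fps) $ n = (euler_even_egf * euler_egf) $ n" .
qed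

lemma altmaj_egf_coeff_recurrence:
  fixes q :: "'a::field_char_0"
  assumes q: "\<And>n. q ^ Suc n \<noteq> 1" and n: "1 \<le> n"
  shows "(1 - q ^ n) * altmaj_egf q $ n =
           (\<Sum>t<n. euler_egf $ (n - t) * (q ^ t * altmaj_egf q $ t))"
proof -
  obtain m where m: "n = Suc m" using n by (cases n) auto
  have nonzero: "1 - q ^ n \<noteq> 0" "q_pochhammer q m \<noteq> 0"
    using q[of m] q_pochhammer_nonzero[OF q] m by auto
  have "(1 - q ^ n) * altmaj_egf q $ n = altmaj_gen {1..n} q / (fact n * q_pochhammer q m)"
    using nonzero by (simp add: altmaj_egf_def m q_pochhammer_Suc field_simps del: of_nat_Suc)
  also have "\<dots> = (\<Sum>t<n. of_nat (n choose t) * of_nat (euler_number (n - t)) *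
                        altmaj_gen {1..t} q * q ^ t * (\<Prod>i\<in>{t<..<n}. 1 - q ^ i)) /
                     (fact n * q_pochhammer q m)"
    by (simp only: altmaj_gen_recurrence[OF n])
  also have "\<dots> = (\<Sum>t<n. euler_egf $ (n - t) * (q ^ t * altmaj_egf q $ t))"
    unfolding sum_divide_distrib
  proof (intro sum.cong refl)
    fix t assume "t \<in> {..<n}"
    then have t: "t \<le> m" "t \<le> n" using m by auto
    have "{t<..<n} = {t<..m}" using m by auto
    then have split: "q_pochhammer q m = q_pochhammer q t * (\<Prod>i\<in>{t<..<n}. 1 - q ^ i)"
      using q_pochhammer_split[OF t(1)] by simp
    then have "q_pochhammer q t \<noteq> 0" "(\<Prod>i\<in>{t<..<n}. 1 - q ^ i) \<noteq> 0"
      using nonzero(2) by auto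
    moreover have binomial: "of_nat (n choose t) = (fact n / (fact t * fact (n - t)) :: 'a)"
      using t(2) by (simp add: binomial_fact)
    ultimately show "of_nat (n choose t) * of_nat (euler_number (n - t)) * altmaj_gen {1..t} q *
                       q ^ t * (\<Prod>i\<in>{t<..<n}. 1 - q ^ i) / (fact n * q_pochhammer q m) =
                     euler_egf $ (n - t) * (q ^ t * altmaj_egf q $ t)"
      unfolding split by (simp add: euler_egf_def altmaj_egf_def field_simps)
  qed
  finally show ?thesis .
qed

lemma altmaj_egf_eq:
  fixes q :: "'a::field_char_0"
  assumes q: "\<And>n. q ^ Suc n \<noteq> 1"
  shows "altmaj_egf q = euler_egf * (altmaj_egf q oo (fps_const q * fps_X))"
proof (rule fps_ext)
  fix n
  let ?f = "\<lambda>n. altmaj_egf q $ n" and ?e = "\<lambda>n. (euler_egf :: 'a fps) $ n"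
  have e0: "?e 0 = 1" by (simp add: euler_egf_def euler_number_0)
  have "(euler_egf * (altmaj_egf q oo (fps_const q * fps_X))) $ n =
          (\<Sum>i=0..n. ?e i * (q ^ (n - i) * ?f (n - i)))"
    by (simp add: fps_mult_nth)
  also have "\<dots> = q ^ n * ?f n + (\<Sum>i=1..n. ?e i * (q ^ (n - i) * ?f (n - i)))"
    using e0 by (simp add: sum.atLeast_Suc_atMost)
  also have "(\<Sum>i=1..n. ?e i * (q ^ (n - i) * ?f (n - i))) = (\<Sum>t<n. ?e (n - t) * (q ^ t * ?f t))"
    by (rule sum.reindex_bij_witness[of _ "\<lambda>t. n - t" "\<lambda>i. n - i"]) auto
  also have "q ^ n * ?f n + \<dots> = ?f n"
  proof (cases "n = 0")
    case False
    then show ?thesis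
      using altmaj_egf_coeff_recurrence[OF q, of n] by (simp add: algebra_simps)
  qed simp
  finally show "?f n = (euler_egf * (altmaj_egf q oo (fps_const q * fps_X))) $ n" ..
qed

lemma fps_deriv_altmaj_egf:
  fixes q :: "'a::field_char_0"
  assumes q: "\<And>n. q ^ Suc n \<noteq> 1"
  shows "fps_deriv (altmaj_egf q) =
           Abs_fps (\<lambda>j. euler_even_egf $ j / (1 - q ^ Suc j)) * altmaj_egf q"
proof (rule fps_deriv_eq_mult_if_q_dilation_eqs[OF q _ altmaj_egf_eq[OF q] fps_deriv_euler_egf])
  show "(euler_egf :: 'a fps) $ 0 = 1" by (simp add: euler_egf_def euler_number_0)
  let ?H = "Abs_fps (\<lambda>j. euler_even_egf $ j / (1 - q ^ Suc j)) :: 'a fps"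
  show "?H = euler_even_egf + fps_const q * (?H oo (fps_const q * fps_X))"
  proof (rule fps_ext)
    fix j
    have coeff: "(euler_even_egf + fps_const q * (?H oo (fps_const q * fps_X))) $ j =
                   euler_even_egf $ j + q * (q ^ j * ?H $ j)"
      by (simp only: fps_add_nth fps_mult_left_const_nth fps_nth_compose_linear)
    have "1 - q ^ Suc j \<noteq> 0" using q[of j] by simp
    then show "?H $ j = (euler_even_egf + fps_const q * (?H oo (fps_const q * fps_X))) $ j"
      unfolding coeff by (simp add: field_simps)
  qed
qed

text \<open>The coefficient of \<open>x\<^sup>n\<close> in \<open>fps_deriv_altmaj_egf\<close>, multiplied by
  \<open>n! (q; q)\<^sub>n\<^sub>+\<^sub>1 \<Prod>\<^sub>j (1 - q\<^sup>j\<^sup>+\<^sup>1)\<close>.\<close>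

lemma altmaj_gen_recurrence_cleared:
  fixes q :: "'a::field_char_0"
  assumes q: "\<And>n. q ^ Suc n \<noteq> 1"
  shows "altmaj_gen {1..Suc n} q * (\<Prod>j | j \<le> n \<and> even j. 1 - q ^ Suc j) =
           (\<Sum>j | j \<le> n \<and> even j. of_nat (n choose j) * of_nat (euler_number j) *
              altmaj_gen {1..n - j} q * (\<Prod>i\<in>{n - j<..Suc n}. 1 - q ^ i) *
              (\<Prod>j'\<in>{j. j \<le> n \<and> even j} - {j}. 1 - q ^ Suc j'))"
proof -
  let ?E = "{j. j \<le> n \<and> even j}"
  let ?M = "\<Prod>j\<in>?E. 1 - q ^ Suc j"
  let ?f = "\<lambda>n. altmaj_egf q $ n" and ?e = "\<lambda>n. (euler_egf :: 'a fps) $ n"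
  have nonzero: "1 - q ^ Suc j \<noteq> 0" "q_pochhammer q j \<noteq> 0" for j
    using q q_pochhammer_nonzero[OF q] by auto
  have "of_nat (Suc n) * ?f (Suc n) =
          (\<Sum>j=0..n. euler_even_egf $ j / (1 - q ^ Suc j) * ?f (n - j))"
    using arg_cong[OF fps_deriv_altmaj_egf[OF q], of "\<lambda>F. F $ n"] by (simp add: fps_mult_nth)
  also have "\<dots> = (\<Sum>j\<in>?E. ?e j / (1 - q ^ Suc j) * ?f (n - j))"
    by (rule sum.mono_neutral_cong_right)
      (auto simp: euler_even_egf_def euler_egf_def)
  finally have "altmaj_gen {1..Suc n} q =
                  fact n * q_pochhammer q (Suc n) * (\<Sum>j\<in>?E. ?e j / (1 - q ^ Suc j) * ?f (n - j))"
    using nonzero(2)[of "Suc n"]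
    by (simp add: altmaj_egf_def fact_Suc field_simps del: of_nat_Suc)
  then have "altmaj_gen {1..Suc n} q * ?M =
               (\<Sum>j\<in>?E. fact n * q_pochhammer q (Suc n) * ?M * (?e j / (1 - q ^ Suc j) * ?f (n - j)))"
    by (simp add: sum_distrib_left sum_distrib_right mult_ac)
  also have "\<dots> = (\<Sum>j\<in>?E. of_nat (n choose j) * of_nat (euler_number j) *
                      altmaj_gen {1..n - j} q * (\<Prod>i\<in>{n - j<..Suc n}. 1 - q ^ i) *
                      (\<Prod>j'\<in>?E - {j}. 1 - q ^ Suc j'))"
  proof (intro sum.cong refl)
    fix j assume j: "j \<in> ?E"
    have split: "q_pochhammer q (Suc n) = q_pochhammer q (n - j) * (\<Prod>i\<in>{n - j<..Suc n}. 1 - q ^ i)"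
      by (rule q_pochhammer_split) simp
    have M: "?M = (1 - q ^ Suc j) * (\<Prod>j'\<in>?E - {j}. 1 - q ^ Suc j')"
      using j by (simp add: prod.remove)
    have binomial: "of_nat (n choose j) = (fact n / (fact j * fact (n - j)) :: 'a)"
      using j by (simp add: binomial_fact)
    show "fact n * q_pochhammer q (Suc n) * ?M * (?e j / (1 - q ^ Suc j) * ?f (n - j)) =
               of_nat (n choose j) * of_nat (euler_number j) * altmaj_gen {1..n - j} q *
                 (\<Prod>i\<in>{n - j<..Suc n}. 1 - q ^ i) * (\<Prod>j'\<in>?E - {j}. 1 - q ^ Suc j')"
      unfolding split M binomial using nonzero[of j] nonzero(2)[of "n - j"]
      by (simp add: euler_egf_def altmaj_egf_def field_simps)
  qed
  finally show ?thesis .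
qed

section \<open>The altmaj polynomial\<close>

definition altmaj_poly :: "nat \<Rightarrow> int poly" where
  "altmaj_poly n = (\<Sum>p\<in>{p. p permutes {1..n}}. monom 1 (altmaj n p))"

lemma of_int_poly_altmaj_poly:
  "of_int (poly (altmaj_poly n) k) = (altmaj_gen {1..n} (of_int k) :: 'a::comm_ring_1)"
proof -
  have "of_int (poly (altmaj_poly n) k) = (\<Sum>p\<in>{p. p permutes {1..n}}. (of_int k :: 'a) ^ altmaj n p)"
    by (simp add: altmaj_poly_def poly_sum poly_monom)
  also have "\<dots> = altmaj_gen {1..n} (of_int k)"
    unfolding altmaj_gen_def by (rule sum_permutes_altmaj)
  finally show ?thesis .
qed

lemma coeff_altmaj_poly:
  "coeff (altmaj_poly n) k =
     (\<Sum>ws\<in>permutations_of_set {1..n}. of_bool (word_altmaj ws = k))"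
proof -
  have "coeff (altmaj_poly n) k = (\<Sum>p\<in>{p. p permutes {1..n}}. of_bool (altmaj n p = k))"
    unfolding altmaj_poly_def coeff_sum coeff_monom by (intro sum.cong refl) auto
  also have "\<dots> = (\<Sum>ws\<in>permutations_of_set {1..n}. of_bool (word_altmaj ws = k))"
    by (rule sum_permutes_altmaj)
  finally show ?thesis .
qed

lemma coeff_altmaj_poly_0: "coeff (altmaj_poly n) 0 = int (euler_number n)"
proof -
  have "coeff (altmaj_poly n) 0 = int (alt_desc_free_count 0 {1..n})"
    unfolding coeff_altmaj_poly alt_desc_free_count_eq_sum word_altmaj_eq_0_iff ..
  then show ?thesis by (simp add: alt_desc_free_count_eq_euler_number)
qed

lemma coeff_altmaj_poly_symmetric:
  assumes "k \<le> (\<Sum>i | 0 < i \<and> i < n. i)"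
  shows "coeff (altmaj_poly n) ((\<Sum>i | 0 < i \<and> i < n. i) - k) = coeff (altmaj_poly n) k"
proof -
  let ?N = "\<Sum>i | 0 < i \<and> i < n. i"
  have "coeff (altmaj_poly n) (?N - k) =
          (\<Sum>ws\<in>permutations_of_set {1..n}. of_bool (word_altmaj (map (\<lambda>x. Suc n - x) ws) = ?N - k))"
    unfolding coeff_altmaj_poly by (rule sum_permutations_of_set_reverse)
  also have "\<dots> = coeff (altmaj_poly n) k"
    unfolding coeff_altmaj_poly
  proof (intro sum.cong refl)
    fix ws assume ws: "ws \<in> permutations_of_set {1..n}"
    then have "length ws = n" "set ws \<subseteq> {1..n}" "distinct ws"
      by (auto simp: permutations_of_set_def length_finite_permutations_of_set)
    then have "word_altmaj (map (\<lambda>x. Suc n - x) ws) = ?N - word_altmaj ws" "word_altmaj ws \<le> ?N"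
      using word_altmaj_map_strict_antimono[OF strict_antimono_on_reverse] word_altmaj_le[of ws]
      by auto
    then show "(of_bool (word_altmaj (map (\<lambda>x. Suc n - x) ws) = ?N - k) :: int) =
               of_bool (word_altmaj ws = k)"
      using assms by auto
  qed
  finally show ?thesis .
qed

lemma coeff_altmaj_poly_eq_0:
  assumes "(\<Sum>i | 0 < i \<and> i < n. i) < k"
  shows "coeff (altmaj_poly n) k = 0"
  unfolding coeff_altmaj_poly
proof (intro sum.neutral ballI)
  fix ws assume "ws \<in> permutations_of_set {1..n}"
  then have "word_altmaj ws \<le> (\<Sum>i | 0 < i \<and> i < n. i)"
    using word_altmaj_le[of ws] by (simp add: length_finite_permutations_of_set)
  then show "of_bool (word_altmaj ws = k) = (0 :: int)" using assms by auto
qed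

lemma degree_altmaj_poly: "degree (altmaj_poly n) = (\<Sum>i | 0 < i \<and> i < n. i)"
proof (rule antisym)
  show "degree (altmaj_poly n) \<le> (\<Sum>i | 0 < i \<and> i < n. i)"
    by (rule degree_le) (simp add: coeff_altmaj_poly_eq_0)
  have "coeff (altmaj_poly n) (\<Sum>i | 0 < i \<and> i < n. i) = int (euler_number n)"
    using coeff_altmaj_poly_symmetric[of 0 n] coeff_altmaj_poly_0 by simp
  then show "(\<Sum>i | 0 < i \<and> i < n. i) \<le> degree (altmaj_poly n)"
    using euler_number_pos[of n] by (intro le_degree) simp
qed

lemma reflect_altmaj_poly: "reflect_poly (altmaj_poly n) = altmaj_poly n"
proof (rule poly_eqI)
  fix k
  show "coeff (reflect_poly (altmaj_poly n)) k = coeff (altmaj_poly n) k"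
    using coeff_altmaj_poly_symmetric[of k n] coeff_altmaj_poly_eq_0[of n k]
    by (auto simp: coeff_reflect_poly degree_altmaj_poly)
qed

lemma int_poly_eqI_ge:
  fixes p r :: "int poly"
  assumes "\<And>k. k \<ge> c \<Longrightarrow> poly p k = poly r k"
  shows "p = r"
proof (rule ccontr)
  assume "p \<noteq> r"
  then have "finite {k. poly (p - r) k = 0}"
    by (intro poly_roots_finite) simp
  moreover have "{c..} \<subseteq> {k. poly (p - r) k = 0}"
    using assms by auto
  ultimately show False
    using infinite_Ici[of c] finite_subset by blast
qed

lemma altmaj_poly_recurrence_cleared:
  "altmaj_poly (Suc n) * (\<Prod>j | j \<le> n \<and> even j. 1 - monom 1 (Suc j)) =
     (\<Sum>j | j \<le> n \<and> even j. of_nat ((n choose j) * euler_number j) * altmaj_poly (n - j) *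
        (\<Prod>i\<in>{n - j<..Suc n}. 1 - monom 1 i) *
        (\<Prod>j'\<in>{j. j \<le> n \<and> even j} - {j}. 1 - monom 1 (Suc j')))"
    (is "?L = ?R")
proof (rule int_poly_eqI_ge)
  fix k :: int assume "k \<ge> 2"
  then have "(1 :: real) < of_int k" by simp
  then have q: "(of_int k :: real) ^ Suc m \<noteq> 1" for m
    using one_less_power[of "of_int k :: real" "Suc m"] by simp
  have prod_monom: "(of_int (poly (\<Prod>i\<in>A. 1 - monom 1 (f i)) k) :: real) = (\<Prod>i\<in>A. 1 - of_int k ^ f i)"
    for A and f :: "nat \<Rightarrow> nat"
    by (simp add: poly_prod poly_monom)
  have "(of_int (poly ?L k) :: real) =
          altmaj_gen {1..Suc n} (of_int k) * (\<Prod>j | j \<le> n \<and> even j. 1 - of_int k ^ Suc j)"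
    by (simp only: poly_mult of_int_mult of_int_poly_altmaj_poly prod_monom)
  also have "\<dots> = (\<Sum>j | j \<le> n \<and> even j. of_nat (n choose j) * of_nat (euler_number j) *
              altmaj_gen {1..n - j} (of_int k) * (\<Prod>i\<in>{n - j<..Suc n}. 1 - of_int k ^ i) *
              (\<Prod>j'\<in>{j. j \<le> n \<and> even j} - {j}. 1 - of_int k ^ Suc j'))"
    by (rule altmaj_gen_recurrence_cleared[OF q])
  also have "\<dots> = of_int (poly ?R k)"
    unfolding poly_sum of_int_sum poly_mult of_int_mult of_int_poly_altmaj_poly prod_monom
    by (simp add: of_nat_poly)
  finally have "(of_int (poly ?L k) :: real) = of_int (poly ?R k)" .
  then show "poly ?L k = poly ?R k" by (simp only: of_int_eq_iff)
qed

section \<open>The factors \<open>1 + q\<^sup>i\<close>\<close>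

text \<open>Splitting the even factors \<open>1 - q\<^sup>2\<^sup>i = (1 - q\<^sup>i) (1 + q\<^sup>i)\<close> of
  \<open>(q; q)\<^sub>N\<close> again and again separates it into \<open>plus_factors N\<close>, the product in the
  theorem, and \<open>odd_factors N\<close>, a product of factors \<open>1 - q\<^sup>m\<close> with odd \<open>m\<close>.\<close>

fun plus_factors :: "nat \<Rightarrow> int poly" where
  "plus_factors N = (if N = 0 then 1 else (\<Prod>i=1..N div 2. 1 + monom 1 i) * plus_factors (N div 2))"

fun odd_factors :: "nat \<Rightarrow> int poly" where
  "odd_factors N =
     (if N = 0 then 1 else (\<Prod>i\<in>{1..N} \<inter> {i. odd i}. 1 - monom 1 i) * odd_factors (N div 2))"

declare plus_factors.simps [simp del] odd_factors.simps [simp del]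

lemma poly_plus_factors_0: "poly (plus_factors N) 0 = 1"
  by (induction N rule: plus_factors.induct)
    (subst plus_factors.simps, simp add: poly_prod poly_monom zero_power)

lemma poly_odd_factors_0: "poly (odd_factors N) 0 = 1"
  by (induction N rule: odd_factors.induct)
    (subst odd_factors.simps, simp add: poly_prod poly_monom zero_power)

lemma plus_factors_nonzero: "plus_factors N \<noteq> 0"
  using poly_plus_factors_0[of N] by auto

lemma odd_factors_nonzero: "odd_factors N \<noteq> 0"
  using poly_odd_factors_0[of N] by auto

lemma prod_even_one_minus_monom:
  "(\<Prod>i\<in>{1..N} - {i. odd i}. 1 - monom 1 i) =
     (\<Prod>i=1..N div 2. (1 - monom 1 i) * (1 + monom 1 i) :: int poly)"
proof -
  have "{1..N} - {i. odd i} = (\<lambda>i. 2 * i) ` {1..N div 2}"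
  proof (intro subset_antisym subsetI)
    fix x assume "x \<in> {1..N} - {i. odd i}"
    then have "x = 2 * (x div 2)" "x div 2 \<in> {1..N div 2}" by (auto simp: div_le_mono)
    then show "x \<in> (\<lambda>i. 2 * i) ` {1..N div 2}" by blast
  qed auto
  moreover have "inj_on (\<lambda>i. 2 * i) {1..N div 2}" by (auto simp: inj_on_def)
  moreover have "1 - monom 1 (2 * i) = (1 - monom 1 i) * (1 + monom 1 i :: int poly)" for i
  proof -
    have "monom 1 (2 * i) = monom 1 i * (monom 1 i :: int poly)"
      by (simp add: mult_monom mult_2)
    then show ?thesis by (simp add: algebra_simps)
  qed
  ultimately show ?thesis
    by (simp add: prod.reindex)
qed

lemma prod_one_minus_monom_eq_factors:
  "(\<Prod>i=1..N. 1 - monom 1 i) = plus_factors N * odd_factors N"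
proof (induction N rule: less_induct)
  case (less N)
  show ?case
  proof (cases "N = 0")
    case False
    have "(\<Prod>i=1..N. 1 - monom 1 i) =
            (\<Prod>i\<in>{1..N} \<inter> {i. odd i}. 1 - monom 1 i) *
            (\<Prod>i\<in>{1..N} - {i. odd i}. 1 - monom 1 i :: int poly)"
      by (rule prod.Int_Diff) simp
    also have "\<dots> = (\<Prod>i\<in>{1..N} \<inter> {i. odd i}. 1 - monom 1 i) *
                     ((\<Prod>i=1..N div 2. 1 + monom 1 i) * (\<Prod>i=1..N div 2. 1 - monom 1 i))"
      unfolding prod_even_one_minus_monom by (simp add: prod.distrib mult.commute)
    also have "\<dots> = plus_factors N * odd_factors N"
      using less[of "N div 2"] False
      by (subst plus_factors.simps, subst odd_factors.simps) (simp add: algebra_simps)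
    finally show ?thesis .
  qed (simp add: plus_factors.simps odd_factors.simps)
qed

lemma odd_factors_dvd: "a \<le> b \<Longrightarrow> odd_factors a dvd odd_factors b"
proof (induction b arbitrary: a rule: less_induct)
  case (less b)
  show ?case
  proof (cases "a = 0")
    case False
    then have "b \<noteq> 0" using less.prems by auto
    have "(\<Prod>i\<in>{1..a} \<inter> {i. odd i}. 1 - monom 1 i) dvd (\<Prod>i\<in>{1..b} \<inter> {i. odd i}. 1 - monom 1 i)"
      using less.prems by (intro prod_dvd_prod_subset) auto
    moreover have "odd_factors (a div 2) dvd odd_factors (b div 2)"
      using less.IH[of "b div 2" "a div 2"] \<open>b \<noteq> 0\<close> less.prems by (simp add: div_le_mono)
    ultimately show ?thesis
      using False \<open>b \<noteq> 0\<close> by (subst (1 2) odd_factors.simps) (auto intro: mult_dvd_mono)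
  qed (simp add: odd_factors.simps)
qed

lemma coprime_one_plus_monom_one_minus_monom:
  assumes "0 < i" "odd m"
  shows "coprime (1 + monom 1 i) (1 - monom 1 m :: int poly)"
proof (rule coprimeI)
  fix c :: "int poly" assume c: "c dvd 1 + monom 1 i" "c dvd 1 - monom 1 m"
  have plus: "1 + monom 1 i dvd (1 + monom 1 (i * m) :: int poly)"
  proof -
    have "monom 1 i ^ m - (- 1) ^ m = (monom 1 i - (- 1)) *
            (\<Sum>j<m. (- 1) ^ (m - Suc j) * monom 1 i ^ j :: int poly)"
      by (rule power_diff_sumr2)
    then have "monom 1 i ^ m + 1 = (1 + monom 1 i) *
            (\<Sum>j<m. (- 1) ^ (m - Suc j) * monom 1 i ^ j :: int poly)"
      using assms(2) by (simp add: add.commute)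
    then have "1 + monom 1 i dvd monom 1 i ^ m + (1 :: int poly)" by (rule dvdI)
    then show ?thesis by (simp add: monom_power add.commute)
  qed
  have minus: "1 - monom 1 m dvd (1 - monom 1 (i * m) :: int poly)"
  proof -
    have "1 - monom 1 (i * m) = (1 - monom 1 m) * (\<Sum>j<i. monom 1 m ^ j :: int poly)"
      using one_diff_power_eq[of "monom 1 m :: int poly" i] by (simp add: monom_power mult.commute)
    then show ?thesis by simp
  qed
  have "c dvd (1 + monom 1 (i * m)) + (1 - monom 1 (i * m))"
    using dvd_trans[OF c(1) plus] dvd_trans[OF c(2) minus] by (rule dvd_add)
  then have "c dvd 2" by simp
  then have "degree c \<le> degree (2 :: int poly)"
    by (rule dvd_imp_degree_le) simp
  then have "degree c = 0" by simp
  then have c_const: "c = [:coeff c 0:]" by (rule degree_0_id[symmetric])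
  obtain d where d: "1 + monom 1 i = c * d" using c(1) by (elim dvdE)
  have "coeff (1 + monom 1 i :: int poly) 0 = 1" using assms(1) by simp
  then have "coeff c 0 * coeff d 0 = 1" by (simp add: d coeff_mult_0)
  then have "coeff c 0 dvd 1" by (rule dvdI[OF sym])
  then show "is_unit c" using c_const by (metis is_unit_const_poly_iff)
qed

lemma coprime_plus_factors: "odd m \<Longrightarrow> coprime (plus_factors N) (1 - monom 1 m)"
proof (induction N rule: plus_factors.induct)
  case (1 N)
  then show ?case
    by (subst plus_factors.simps)
      (auto intro!: prod_coprime_left coprime_one_plus_monom_one_minus_monom)
qed

lemma plus_factors_dvd_prod:
  assumes "m \<le> N"
  shows "plus_factors N dvd plus_factors m * (\<Prod>i\<in>{m<..N}. 1 - monom 1 i)"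
proof -
  obtain T where T: "odd_factors N = odd_factors m * T"
    using odd_factors_dvd[OF assms] by (elim dvdE)
  have "{1..N} = {1..m} \<union> {m<..N}" "{1..m} \<inter> {m<..N} = {}" using assms by auto
  then have "(\<Prod>i=1..N. 1 - monom 1 i) = (\<Prod>i=1..m. 1 - monom 1 i) * (\<Prod>i\<in>{m<..N}. 1 - monom 1 i :: int poly)"
    by (simp add: prod.union_disjoint)
  then have "odd_factors m * (plus_factors m * (\<Prod>i\<in>{m<..N}. 1 - monom 1 i)) =
               odd_factors m * (plus_factors N * T)"
    unfolding prod_one_minus_monom_eq_factors T by (simp only: mult_ac)
  then show ?thesis
    using odd_factors_nonzero[of m] by (metis dvd_triv_left mult_left_cancel)
qed

lemma plus_factors_dvd_altmaj_poly: "plus_factors N dvd altmaj_poly N"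
proof (induction N rule: less_induct)
  case (less N)
  show ?case
  proof (cases N)
    case (Suc n)
    let ?E = "{j. j \<le> n \<and> even j}"
    have "plus_factors (Suc n) dvd altmaj_poly (n - j) * (\<Prod>i\<in>{n - j<..Suc n}. 1 - monom 1 i)" for j
    proof (rule dvd_trans)
      show "plus_factors (Suc n) dvd plus_factors (n - j) * (\<Prod>i\<in>{n - j<..Suc n}. 1 - monom 1 i)"
        by (rule plus_factors_dvd_prod) simp
      show "plus_factors (n - j) * (\<Prod>i\<in>{n - j<..Suc n}. 1 - monom 1 i) dvd
              altmaj_poly (n - j) * (\<Prod>i\<in>{n - j<..Suc n}. 1 - monom 1 i)"
        using less.IH[of "n - j"] Suc by (simp add: mult_dvd_mono)
    qed
    then have "plus_factors (Suc n) dvd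
                 of_nat ((n choose j) * euler_number j) * (altmaj_poly (n - j) *
                   (\<Prod>i\<in>{n - j<..Suc n}. 1 - monom 1 i)) * (\<Prod>j'\<in>?E - {j}. 1 - monom 1 (Suc j'))"
      for j by (rule dvd_mult2[OF dvd_mult])
    then have "plus_factors (Suc n) dvd
                 (\<Sum>j\<in>?E. of_nat ((n choose j) * euler_number j) * altmaj_poly (n - j) *
                    (\<Prod>i\<in>{n - j<..Suc n}. 1 - monom 1 i) * (\<Prod>j'\<in>?E - {j}. 1 - monom 1 (Suc j')))"
      by (intro dvd_sum) (simp only: mult.assoc)
    then have "plus_factors (Suc n) dvd altmaj_poly (Suc n) * (\<Prod>j\<in>?E. 1 - monom 1 (Suc j))"
      by (simp only: altmaj_poly_recurrence_cleared)
    moreover have "coprime (plus_factors (Suc n)) (\<Prod>j\<in>?E. 1 - monom 1 (Suc j))"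
      by (intro prod_coprime_right coprime_plus_factors) simp
    ultimately show ?thesis
      using Suc coprime_dvd_mult_left_iff by blast
  qed (simp add: plus_factors.simps)
qed

lemma prod_one_plus_monom_eq_plus_factors:
  "N < 2 ^ Suc L \<Longrightarrow> (\<Prod>k=1..L. \<Prod>i=1..N div 2 ^ k. 1 + monom 1 i) = plus_factors N"
proof (induction L arbitrary: N)
  case 0
  then show ?case
    by (subst plus_factors.simps) (simp add: plus_factors.simps)
next
  case (Suc L)
  have "(\<Prod>k=1..Suc L. \<Prod>i=1..N div 2 ^ k. 1 + monom 1 i) =
          (\<Prod>i=1..N div 2. 1 + monom 1 i) * (\<Prod>k=Suc 1..Suc L. \<Prod>i=1..N div 2 ^ k. 1 + monom 1 i)"
    by (simp add: prod.atLeast_Suc_atMost mult.assoc)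
  also have "(\<Prod>k=Suc 1..Suc L. \<Prod>i=1..N div 2 ^ k. 1 + monom 1 i) =
               (\<Prod>k=1..L. \<Prod>i=1..N div 2 div 2 ^ k. 1 + monom 1 i :: int poly)"
    unfolding prod.shift_bounds_cl_Suc_ivl by (simp add: div_mult2_eq)
  also have "\<dots> = plus_factors (N div 2)"
    using Suc.prems by (intro Suc.IH) simp
  finally show ?case
    by (cases "N = 0") (simp_all add: plus_factors.simps[of N] plus_factors.simps[of 0])
qed

lemma less_two_power_Suc_floor_log:
  assumes "1 \<le> n"
  shows "n < 2 ^ Suc (nat \<lfloor>log 2 (real n)\<rfloor>)"
proof -
  obtain i where i: "2 ^ i \<le> n" "n < 2 ^ (i + 1)"
    using ex_power_ivl1[of 2 n] assms by auto
  then have "\<lfloor>log 2 (real n)\<rfloor> = i"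
    using floor_log_nat_eq_if[of 2 i n] by simp
  then show ?thesis using i by simp
qed

lemma reflect_plus_factors: "reflect_poly (plus_factors N) = plus_factors N"
proof (induction N rule: plus_factors.induct)
  case (1 N)
  have "reflect_poly (1 + monom 1 i) = (1 + monom 1 i :: int poly)" if "0 < i" for i
  proof -
    have "degree (1 + monom 1 i :: int poly) = i"
      using that by (subst degree_add_eq_right) (simp_all add: degree_monom_eq)
    then show ?thesis
      using that by (intro poly_eqI) (auto simp: coeff_reflect_poly coeff_1)
  qed
  then show ?case
    using 1 by (subst (1 2) plus_factors.simps) (simp add: reflect_poly_mult reflect_poly_prod)
qed

lemma palindromicI: "reflect_poly p = p \<Longrightarrow> palindromic p"
  unfolding palindromic_def by (metis coeff_reflect_poly not_le)

theorem theorem1p2: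
  fixes n :: nat
  assumes "n \<ge> 1"
  shows "\<exists>E :: int poly.
           palindromic E \<and> coeff E 0 = int (euler_number n) \<and>
           (\<Sum>p\<in>{p. p permutes {1..n}}. monom 1 (altmaj n p)) =
             E * (\<Prod>k\<in>{1..nat \<lfloor>log 2 (real n)\<rfloor>}. \<Prod>i\<in>{1..n div 2^k}. 1 + monom 1 i)"
proof -
  obtain E where E: "altmaj_poly n = plus_factors n * E"
    using plus_factors_dvd_altmaj_poly[of n] by (elim dvdE)
  have "plus_factors n * reflect_poly E = plus_factors n * E"
    using reflect_altmaj_poly[of n] by (simp add: E reflect_poly_mult reflect_plus_factors)
  then have "palindromic E"
    using plus_factors_nonzero by (intro palindromicI) simp
  moreover have "coeff E 0 = int (euler_number n)"
    using coeff_altmaj_poly_0[of n] poly_plus_factors_0[of n] by (simp add: E coeff_mult_0 poly_0_coeff_0)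
  moreover have "(\<Prod>k\<in>{1..nat \<lfloor>log 2 (real n)\<rfloor>}. \<Prod>i\<in>{1..n div 2^k}. 1 + monom 1 i) = plus_factors n"
    by (rule prod_one_plus_monom_eq_plus_factors[OF less_two_power_Suc_floor_log[OF assms]])
  ultimately show ?thesis
    using E by (auto simp: altmaj_poly_def mult.commute)
qed

end
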